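(* Let $M \in \mathbb{Z}^{\ell \times m}$ have full column rank and let $F \in \mathbb{Z}^{n \times m}$. Then the $(\ell+n)\times(m+n)$ integer matrix $$\begin{bmatrix} M & 0 \\ F & I_n \end{bmatrix}$$ has full column rank, and its Hermite basis has the block shape $$\begin{bmatrix} T & X \\ 0 & H \end{bmatrix}$$ with $T \in \mathbb{Z}^{m\times m}$, $X\in\mathbb{Z}^{m\times n}$, $H \in \mathbb{Z}^{n \times n}$, where $\mathcal{L}(T) = \mathcal{L}(M) + \mathcal{L}(F)$ and $\mathcal{L}(H) = \mathcal{R}(M,F)$.
   Context: For an integer matrix $A$, $\mathcal{L}(A)$ denotes the lattice of all $\mathbb{Z}$-linear combinations of the rows of $A$; $\mathcal{L}(A)+\mathcal{L}(B)$ is the lattice generated by the rows of $A$ and $B$ together. For $M \in \mathbb{Z}^{\ell \times m}$ of full column rank and $F \in \mathbb{Z}^{n \times m}$, the integer relations lattice is $\mathcal{R}(M,F) := \{p \in \mathbb{Z}^{1\times n} : pF \in \mathcal{L}(M)\}$ (equivalently, $pF = qM$ for some integer row vector $q$). A full column rank integer matrix with $m$ columns is in (row) Hermite form if its first $m$ rows form an upper triangular matrix with positive diagonal entries $h_1,\dots,h_m$, every entry above the diagonal in column $j$ lies in $[0,h_j)$, and all remaining rows are zero. Every full column rank integer matrix $A$ has a unique Hermite form $WA$ with $W$ unimodular; the Hermite basis of $A$ is the nonsingular square matrix consisting of the nonzero rows of the Hermite form of $A$; it is the unique matrix in Hermite form whose row lattice equals $\mathcal{L}(A)$. *)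

theory Defs
  imports "Jordan_Normal_Form.Determinant"
begin

text \<open>Row vectors are represented as vectors of type int vec; the row lattice of A is
  the set of integer combinations of its rows, i.e. the vectors c^T A = A^T c.\<close>

definition row_lattice :: "int mat \<Rightarrow> int vec set" where
  "row_lattice A = {transpose_mat A *\<^sub>v c | c. c \<in> carrier_vec (dim_row A)}"

definition lattice_sum :: "int vec set \<Rightarrow> int vec set \<Rightarrow> int vec set" where
  "lattice_sum L1 L2 = {u + v | u v. u \<in> L1 \<and> v \<in> L2}"

definition full_column_rank :: "int mat \<Rightarrow> bool" where
  "full_column_rank A \<longleftrightarrow>
     (\<forall>v :: rat vec. v \<in> carrier_vec (dim_col A) \<longrightarrow>
        map_mat rat_of_int A *\<^sub>v v = 0\<^sub>v (dim_row A) \<longrightarrow> v = 0\<^sub>v (dim_col A))"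

definition relations_lattice :: "int mat \<Rightarrow> int mat \<Rightarrow> int vec set" where
  "relations_lattice M F =
     {p. p \<in> carrier_vec (dim_row F) \<and> transpose_mat F *\<^sub>v p \<in> row_lattice M}"

definition hermite_form :: "int mat \<Rightarrow> bool" where
  "hermite_form A \<longleftrightarrow>
     dim_col A \<le> dim_row A \<and>
     (\<forall>i j. i < dim_col A \<longrightarrow> j < i \<longrightarrow> A $$ (i, j) = 0) \<and>
     (\<forall>j < dim_col A. A $$ (j, j) > 0) \<and>
     (\<forall>i j. j < dim_col A \<longrightarrow> i < j \<longrightarrow> 0 \<le> A $$ (i, j) \<and> A $$ (i, j) < A $$ (j, j)) \<and>
     (\<forall>i j. dim_col A \<le> i \<longrightarrow> i < dim_row A \<longrightarrow> j < dim_col A \<longrightarrow> A $$ (i, j) = 0)"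

definition unimodular :: "int mat \<Rightarrow> bool" where
  "unimodular W \<longleftrightarrow> W \<in> carrier_mat (dim_row W) (dim_row W) \<and> (det W = 1 \<or> det W = -1)"

text \<open>B is the Hermite basis of A: the nonzero rows (the first m rows) of the Hermite
  form W A of A, with W unimodular.\<close>
definition hermite_basis :: "int mat \<Rightarrow> int mat \<Rightarrow> bool" where
  "hermite_basis A B \<longleftrightarrow>
     (\<exists>W. W \<in> carrier_mat (dim_row A) (dim_row A) \<and> unimodular W \<and>
          hermite_form (W * A) \<and>
          B = mat (dim_col A) (dim_col A) (\<lambda>(i, j). (W * A) $$ (i, j)))"

end

theory Submission
  imports Defs
begin

(* Unimodular row operations (Euclid's algorithm on pairs of rows, sign changes, reduction
   modulo the pivots) bring an integer matrix of full column rank into Hermite form column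
   by column; full column rank is what makes every pivot nonzero.  Multiplying by a
   unimodular matrix and deleting zero rows preserve the row lattice, so the Hermite basis
   B of K = [M 0; F I] has L(B) = L(K); being upper triangular with positive diagonal,
   B = [T X; 0 H] with T nonsingular.  Now read L(K) in two ways.  Projecting onto the
   first m coordinates gives L(M) + L(F) from the rows of K and L(T) from the rows of B.
   The vectors (0, w) of L(K) give R(M, F) from K, as (cM + dF, d) has head 0 exactly when
   dF = (-c)M, and L(H) from B, as (aT, aX + bH) has head 0 only for a = 0. *)

section \<open>Unimodular row reduction\<close>

definition unimodular_reduces :: "int mat \<Rightarrow> int mat \<Rightarrow> bool" where
  "unimodular_reduces A B \<longleftrightarrow>
     (\<exists>W. W \<in> carrier_mat (dim_row A) (dim_row A) \<and> unimodular W \<and> B = W * A)"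

lemma unimodular_reducesI:
  assumes "A \<in> carrier_mat r c" "W \<in> carrier_mat r r" "det W = 1 \<or> det W = -1" "B = W * A"
  shows "unimodular_reduces A B"
  using assms unfolding unimodular_reduces_def unimodular_def by auto

lemma unimodular_reduces_refl: "unimodular_reduces A A"
  by (rule unimodular_reducesI[of A _ _ "1\<^sub>m (dim_row A)"]) auto

lemma unimodular_reduces_carrier:
  "unimodular_reduces A B \<Longrightarrow> A \<in> carrier_mat r c \<Longrightarrow> B \<in> carrier_mat r c"
  unfolding unimodular_reduces_def by auto

lemma unimodular_reduces_trans:
  assumes "unimodular_reduces A B" "unimodular_reduces B C"
  shows "unimodular_reduces A C"
proof -
  obtain V where V: "V \<in> carrier_mat (dim_row A) (dim_row A)" "det V = 1 \<or> det V = -1" "B = V * A"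
    using assms(1) unfolding unimodular_reduces_def unimodular_def by auto
  obtain W where W: "W \<in> carrier_mat (dim_row A) (dim_row A)" "det W = 1 \<or> det W = -1" "C = W * B"
    using assms(2) V(1,3) unfolding unimodular_reduces_def unimodular_def by auto
  have "C = (W * V) * A"
    using V W by (simp add: assoc_mult_mat[of W _ _ V _ A "dim_col A"])
  moreover have "det (W * V) = 1 \<or> det (W * V) = -1"
    using V W by (auto simp: det_mult[OF W(1) V(1)])
  ultimately show ?thesis
    using V(1) W(1) by (intro unimodular_reducesI[of A _ "dim_col A" "W * V"]) auto
qed

lemma unimodular_reduces_swaprows:
  "A \<in> carrier_mat r c \<Longrightarrow> k < r \<Longrightarrow> l < r \<Longrightarrow> k \<noteq> l \<Longrightarrow> unimodular_reduces A (swaprows k l A)"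
  by (rule unimodular_reducesI[OF _ swaprows_mat_carrier _ swaprows_mat])
    (auto simp: det_swaprows_mat)

lemma unimodular_reduces_addrow:
  "A \<in> carrier_mat r c \<Longrightarrow> l < r \<Longrightarrow> k \<noteq> l \<Longrightarrow> unimodular_reduces A (addrow a k l A)"
  by (rule unimodular_reducesI[OF _ addrow_mat_carrier _ addrow_mat])
    (auto simp: det_addrow_mat)

lemma unimodular_reduces_negate_row:
  "A \<in> carrier_mat r c \<Longrightarrow> k < r \<Longrightarrow> unimodular_reduces A (multrow k (-1) A)"
  by (rule unimodular_reducesI[OF _ multrow_mat_carrier _ multrow_mat])
    (auto simp: det_multrow_mat)

lemma full_column_rank_unimodular_reduces:
  assumes "unimodular_reduces A B" "full_column_rank A"
  shows "full_column_rank B"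
  unfolding full_column_rank_def
proof (intro allI impI)
  obtain W where W: "W \<in> carrier_mat (dim_row A) (dim_row A)" "det W = 1 \<or> det W = -1" "B = W * A"
    using assms(1) unfolding unimodular_reduces_def unimodular_def by auto
  let ?q = "map_mat rat_of_int"
  fix v :: "rat vec"
  assume v: "v \<in> carrier_vec (dim_col B)" "?q B *\<^sub>v v = 0\<^sub>v (dim_row B)"
  have A: "?q A \<in> carrier_mat (dim_row A) (dim_col A)" and Wq: "?q W \<in> carrier_mat (dim_row A) (dim_row A)"
    using W(1) by auto
  have "?q B = ?q W * ?q A"
    using of_int_hom.mat_hom_mult[OF W(1), of A "dim_col A"] W(3) by auto
  then have "?q W *\<^sub>v (?q A *\<^sub>v v) = 0\<^sub>v (dim_row A)"
    using v W by (simp add: assoc_mult_mat_vec[OF Wq A])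
  moreover have "det (?q W) \<noteq> 0"
    using W(2) by (auto simp: of_int_hom.hom_det)
  ultimately have "?q A *\<^sub>v v = 0\<^sub>v (dim_row A)"
    using det_0_iff_vec_prod_zero_field[OF Wq] A by (metis mult_mat_vec_carrier v(1) W(3) index_mult_mat(3))
  then show "v = 0\<^sub>v (dim_col B)"
    using assms(2) v(1) W unfolding full_column_rank_def by auto
qed

text \<open>Euclid's algorithm on the entries (k, q) and (i, q).\<close>

lemma unimodular_reduces_clear_entry:
  assumes "A \<in> carrier_mat r c" "k < r" "i < r" "k \<noteq> i" "q < c"
  shows "\<exists>B. unimodular_reduces A B \<and> B $$ (i, q) = 0 \<and>
    (\<forall>p<r. p \<noteq> k \<longrightarrow> p \<noteq> i \<longrightarrow> (\<forall>j<c. B $$ (p, j) = A $$ (p, j))) \<and>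
    (\<forall>j<c. A $$ (k, j) = 0 \<and> A $$ (i, j) = 0 \<longrightarrow> B $$ (k, j) = 0 \<and> B $$ (i, j) = 0)"
  using assms(1)
proof (induction "nat \<bar>A $$ (i, q)\<bar>" arbitrary: A rule: less_induct)
  case less
  show ?case
  proof (cases "A $$ (i, q) = 0")
    case True
    then show ?thesis
      using unimodular_reduces_refl by blast
  next
    case False
    define A' where "A' = swaprows k i (addrow (- (A $$ (k, q) div A $$ (i, q))) k i A)"
    have A': "A' \<in> carrier_mat r c"
      using less.prems by (simp add: A'_def)
    have entry: "A' $$ (p, j) =
        (if p = i then A $$ (k, j) - (A $$ (k, q) div A $$ (i, q)) * A $$ (i, j)
         else if p = k then A $$ (i, j) else A $$ (p, j))" if "p < r" "j < c" for p j
      using that less.prems assms(2-4) by (auto simp: A'_def)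
    have red: "unimodular_reduces A A'"
      unfolding A'_def using less.prems assms(2-4)
      by (intro unimodular_reduces_trans[OF unimodular_reduces_addrow unimodular_reduces_swaprows]) auto
    have "A' $$ (i, q) = A $$ (k, q) mod A $$ (i, q)"
      using entry[OF assms(3,5)] by (metis minus_div_mult_eq_mod)
    then have "nat \<bar>A' $$ (i, q)\<bar> < nat \<bar>A $$ (i, q)\<bar>"
      using False by (simp add: abs_mod_less)
    then obtain B where B: "unimodular_reduces A' B" "B $$ (i, q) = 0"
      "\<forall>p<r. p \<noteq> k \<longrightarrow> p \<noteq> i \<longrightarrow> (\<forall>j<c. B $$ (p, j) = A' $$ (p, j))"
      "\<forall>j<c. A' $$ (k, j) = 0 \<and> A' $$ (i, j) = 0 \<longrightarrow> B $$ (k, j) = 0 \<and> B $$ (i, j) = 0"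
      using less.hyps[OF _ A'] by blast
    show ?thesis
      using unimodular_reduces_trans[OF red B(1)] B(2-4) entry assms(2-4)
      by (intro exI[of _ B]) auto
  qed
qed

lemma unimodular_reduces_clear_column_below:
  assumes A: "A \<in> carrier_mat r c" and k: "k < r" "k < c"
  shows "\<exists>B. unimodular_reduces A B \<and> (\<forall>i. k < i \<longrightarrow> i < r \<longrightarrow> B $$ (i, k) = 0) \<and>
    (\<forall>p<k. \<forall>j<c. B $$ (p, j) = A $$ (p, j)) \<and>
    (\<forall>j<c. (\<forall>i. k \<le> i \<longrightarrow> i < r \<longrightarrow> A $$ (i, j) = 0) \<longrightarrow> (\<forall>i. k \<le> i \<longrightarrow> i < r \<longrightarrow> B $$ (i, j) = 0))"
proof -
  have "\<exists>B. unimodular_reduces A B \<and> (\<forall>i. k < i \<longrightarrow> i < r \<longrightarrow> i \<le> k + t \<longrightarrow> B $$ (i, k) = 0) \<and>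
    (\<forall>p<k. \<forall>j<c. B $$ (p, j) = A $$ (p, j)) \<and>
    (\<forall>j<c. (\<forall>i. k \<le> i \<longrightarrow> i < r \<longrightarrow> A $$ (i, j) = 0) \<longrightarrow> (\<forall>i. k \<le> i \<longrightarrow> i < r \<longrightarrow> B $$ (i, j) = 0))"
    for t
  proof (induction t)
    case 0
    show ?case
      using unimodular_reduces_refl by auto
  next
    case (Suc t)
    then obtain B where B: "unimodular_reduces A B"
      "\<forall>i. k < i \<longrightarrow> i < r \<longrightarrow> i \<le> k + t \<longrightarrow> B $$ (i, k) = 0"
      "\<forall>p<k. \<forall>j<c. B $$ (p, j) = A $$ (p, j)"
      "\<forall>j<c. (\<forall>i. k \<le> i \<longrightarrow> i < r \<longrightarrow> A $$ (i, j) = 0) \<longrightarrow> (\<forall>i. k \<le> i \<longrightarrow> i < r \<longrightarrow> B $$ (i, j) = 0)"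
      by blast
    show ?case
    proof (cases "k + Suc t < r")
      case False
      then show ?thesis
        using B by (intro exI[of _ B]) (auto simp: le_Suc_eq)
    next
      case True
      obtain B' where B': "unimodular_reduces B B'" "B' $$ (k + Suc t, k) = 0"
        "\<forall>p<r. p \<noteq> k \<longrightarrow> p \<noteq> k + Suc t \<longrightarrow> (\<forall>j<c. B' $$ (p, j) = B $$ (p, j))"
        "\<forall>j<c. B $$ (k, j) = 0 \<and> B $$ (k + Suc t, j) = 0 \<longrightarrow> B' $$ (k, j) = 0 \<and> B' $$ (k + Suc t, j) = 0"
        using unimodular_reduces_clear_entry[OF unimodular_reduces_carrier[OF B(1) A] k(1) True _ k(2)]
        by auto
      have "\<forall>i. k \<le> i \<longrightarrow> i < r \<longrightarrow> B' $$ (i, j) = 0"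
        if "j < c" "\<forall>i. k \<le> i \<longrightarrow> i < r \<longrightarrow> A $$ (i, j) = 0" for j
      proof (intro allI impI)
        fix i assume i: "k \<le> i" "i < r"
        have "\<forall>i. k \<le> i \<longrightarrow> i < r \<longrightarrow> B $$ (i, j) = 0"
          using that B(4) by blast
        then show "B' $$ (i, j) = 0"
          using B'(3,4) True that(1) i by (cases "i = k \<or> i = k + Suc t") auto
      qed
      then show ?thesis
        using unimodular_reduces_trans[OF B(1) B'(1)] B(2,3) B'(2,3) k
        by (intro exI[of _ B']) (auto simp: le_Suc_eq)
    qed
  qed
  from this[of r] show ?thesis
    by auto
qed

lemma unimodular_reduces_positive_pivot:
  assumes A: "A \<in> carrier_mat r c" and k: "k < r" "k < c" and pivot: "A $$ (k, k) \<noteq> 0"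
  shows "\<exists>B. unimodular_reduces A B \<and> 0 < B $$ (k, k) \<and>
    (\<forall>i<r. \<forall>j<c. i \<noteq> k \<longrightarrow> B $$ (i, j) = A $$ (i, j)) \<and>
    (\<forall>j<c. A $$ (k, j) = 0 \<longrightarrow> B $$ (k, j) = 0)"
proof (cases "A $$ (k, k) < 0")
  case True
  then show ?thesis
    using unimodular_reduces_negate_row[OF A k(1)] A k
    by (intro exI[of _ "multrow k (-1) A"]) auto
next
  case False
  then show ?thesis
    using unimodular_reduces_refl pivot by (intro exI[of _ A]) auto
qed

lemma unimodular_reduces_reduce_column_above:
  assumes A: "A \<in> carrier_mat r c" and k: "k < r" "k < c"
    and pivot: "0 < A $$ (k, k)" and left: "\<forall>j<k. A $$ (k, j) = 0"
  shows "\<exists>B. unimodular_reduces A B \<and> (\<forall>i<k. 0 \<le> B $$ (i, k) \<and> B $$ (i, k) < B $$ (k, k)) \<and>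
    (\<forall>p<r. \<forall>j<c. k \<le> p \<or> j < k \<longrightarrow> B $$ (p, j) = A $$ (p, j))"
proof -
  have "\<exists>B. unimodular_reduces A B \<and> (\<forall>i<min t k. 0 \<le> B $$ (i, k) \<and> B $$ (i, k) < B $$ (k, k)) \<and>
    (\<forall>p<r. \<forall>j<c. k \<le> p \<or> j < k \<longrightarrow> B $$ (p, j) = A $$ (p, j))" for t
  proof (induction t)
    case 0
    show ?case
      using unimodular_reduces_refl by auto
  next
    case (Suc t)
    then obtain B where B: "unimodular_reduces A B"
      "\<forall>i<min t k. 0 \<le> B $$ (i, k) \<and> B $$ (i, k) < B $$ (k, k)"
      "\<forall>p<r. \<forall>j<c. k \<le> p \<or> j < k \<longrightarrow> B $$ (p, j) = A $$ (p, j)"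
      by blast
    show ?case
    proof (cases "t < k")
      case False
      then show ?thesis
        using B by (intro exI[of _ B]) auto
    next
      case True
      have Bc: "B \<in> carrier_mat r c"
        using unimodular_reduces_carrier[OF B(1) A] .
      define B' where "B' = addrow (- (B $$ (t, k) div B $$ (k, k))) t k B"
      have entry: "B' $$ (p, j) =
          (if p = t then B $$ (t, j) - (B $$ (t, k) div B $$ (k, k)) * B $$ (k, j) else B $$ (p, j))"
        if "p < r" "j < c" for p j
        using that Bc by (simp add: B'_def)
      have "B' $$ (t, k) = B $$ (t, k) mod B $$ (k, k)"
        using entry[of t k] True k by (simp add: minus_div_mult_eq_mod[symmetric] mult.commute)
      moreover have "B $$ (k, k) = A $$ (k, k)" "\<forall>j<k. B $$ (k, j) = 0"
        using B(3) k left by auto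
      moreover have "unimodular_reduces A B'"
        unfolding B'_def using True
        by (intro unimodular_reduces_trans[OF B(1) unimodular_reduces_addrow[OF Bc k(1)]]) simp
      ultimately show ?thesis
        using True B(2,3) pivot entry k by (intro exI[of _ B']) (auto simp: less_Suc_eq)
    qed
  qed
  from this[of k] show ?thesis
    by auto
qed

section \<open>Existence of the Hermite form\<close>

definition hermite_prefix :: "int mat \<Rightarrow> nat \<Rightarrow> bool" where
  "hermite_prefix A k \<longleftrightarrow>
     (\<forall>j<k. j < dim_row A \<and> 0 < A $$ (j, j)) \<and>
     (\<forall>j<k. \<forall>i. j < i \<longrightarrow> i < dim_row A \<longrightarrow> A $$ (i, j) = 0) \<and>
     (\<forall>j<k. \<forall>i<j. 0 \<le> A $$ (i, j) \<and> A $$ (i, j) < A $$ (j, j))"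

lemma hermite_prefix_Suc:
  "hermite_prefix A (Suc k) \<longleftrightarrow> hermite_prefix A k \<and> k < dim_row A \<and> 0 < A $$ (k, k) \<and>
    (\<forall>i. k < i \<longrightarrow> i < dim_row A \<longrightarrow> A $$ (i, k) = 0) \<and>
    (\<forall>i<k. 0 \<le> A $$ (i, k) \<and> A $$ (i, k) < A $$ (k, k))"
  unfolding hermite_prefix_def by (auto simp: less_Suc_eq)

lemma hermite_prefix_cong:
  assumes "hermite_prefix A k" "dim_row B = dim_row A"
    and "\<forall>i<dim_row A. \<forall>j<k. B $$ (i, j) = A $$ (i, j)"
  shows "hermite_prefix B k"
  using assms unfolding hermite_prefix_def by auto

lemma hermite_form_if_hermite_prefix:
  assumes "hermite_prefix A (dim_col A)"
  shows "hermite_form A"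
proof -
  have "dim_col A \<le> dim_row A"
    using assms unfolding hermite_prefix_def by (cases "dim_col A") auto
  then show ?thesis
    using assms unfolding hermite_prefix_def hermite_form_def by auto
qed

text \<open>Otherwise the first k + 1 columns would be linearly dependent: the leading
  (k + 1) \<times> (k + 1) block is upper triangular with a zero on its diagonal.\<close>

lemma hermite_prefix_pivot_nonzero:
  assumes A: "A \<in> carrier_mat r c" and rank: "full_column_rank A"
    and prefix: "hermite_prefix A k" and k: "k < c"
    and below: "\<forall>i. k < i \<longrightarrow> i < r \<longrightarrow> A $$ (i, k) = 0"
  shows "k < r \<and> A $$ (k, k) \<noteq> 0"
proof (rule ccontr)
  assume singular: "\<not> (k < r \<and> A $$ (k, k) \<noteq> 0)"
  have lower: "A $$ (i, j) = 0" if "j \<le> k" "j < i" "i < r" for i j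
  proof (cases "j = k")
    case False
    then show ?thesis
      using prefix that A unfolding hermite_prefix_def by auto
  qed (use below that in auto)
  define S :: "rat mat" where
    "S = mat (Suc k) (Suc k) (\<lambda>(i, j). if i < r then rat_of_int (A $$ (i, j)) else 0)"
  have S: "S \<in> carrier_mat (Suc k) (Suc k)"
    by (simp add: S_def)
  have "upper_triangular S"
    using lower by (intro upper_triangularI) (auto simp: S_def)
  then have "det S = (\<Prod>i = 0..<Suc k. S $$ (i, i))"
    using S by (simp add: det_upper_triangular prod_list_diag_prod)
  also have "\<dots> = 0"
    using singular by (intro prod_zero bexI[of _ k]) (auto simp: S_def)
  finally obtain v where v: "v \<in> carrier_vec (Suc k)" "v \<noteq> 0\<^sub>v (Suc k)" "S *\<^sub>v v = 0\<^sub>v (Suc k)"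
    using det_0_iff_vec_prod_zero_field[OF S] by blast
  define w where "w = vec c (\<lambda>j. if j \<le> k then v $ j else 0)"
  have w: "w \<in> carrier_vec c"
    by (simp add: w_def)
  have "w \<noteq> 0\<^sub>v c"
  proof
    assume "w = 0\<^sub>v c"
    moreover have "w $ j = v $ j" if "j < Suc k" for j
      using that k by (simp add: w_def)
    ultimately have "v = 0\<^sub>v (Suc k)"
      using v(1) k by (intro eq_vecI) auto
    then show False
      using v(2) by contradiction
  qed
  moreover have "map_mat rat_of_int A *\<^sub>v w = 0\<^sub>v r"
  proof (rule eq_vecI)
    fix i assume "i < dim_vec (0\<^sub>v r :: rat vec)"
    then have i: "i < r" by simp
    have "(map_mat rat_of_int A *\<^sub>v w) $ i = (\<Sum>j<c. rat_of_int (A $$ (i, j)) * w $ j)"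
      using i A w by (simp add: scalar_prod_def lessThan_atLeast0)
    also have "\<dots> = (\<Sum>j<Suc k. rat_of_int (A $$ (i, j)) * v $ j)"
      using k by (intro sum.mono_neutral_cong_right) (auto simp: w_def)
    also have "\<dots> = 0"
    proof (cases "i \<le> k")
      case True
      have "(S *\<^sub>v v) $ i = (\<Sum>j<Suc k. S $$ (i, j) * v $ j)"
        using True S v(1) by (simp add: scalar_prod_def lessThan_atLeast0)
      also have "\<dots> = (\<Sum>j<Suc k. rat_of_int (A $$ (i, j)) * v $ j)"
        using True i by (intro sum.cong) (auto simp: S_def)
      finally show ?thesis
        using v(3) True by simp
    qed (use i lower in simp)
    finally show "(map_mat rat_of_int A *\<^sub>v w) $ i = 0\<^sub>v r $ i"
      using i by simp
  qed (use A in simp)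
  ultimately show False
    using rank w A unfolding full_column_rank_def by auto
qed

text \<open>Clearing column k below the diagonal, fixing the sign of the pivot and reducing the
  entries above it all leave the first k columns unchanged: these vanish in the rows
  modified by the first two steps and in the row k used by the third.\<close>

lemma hermite_prefix_extend:
  assumes A: "A \<in> carrier_mat r c" and rank: "full_column_rank A"
    and prefix: "hermite_prefix A k" and k: "k < c"
  shows "\<exists>B. unimodular_reduces A B \<and> hermite_prefix B (Suc k)"
proof -
  have kr: "k < r"
    using hermite_prefix_pivot_nonzero[OF A rank prefix k] by (cases "k < r") auto
  have left_zero: "\<forall>i. k \<le> i \<longrightarrow> i < r \<longrightarrow> A $$ (i, j) = 0" if "j < k" for j
    using prefix that A unfolding hermite_prefix_def by auto
  obtain A1 where A1: "unimodular_reduces A A1" "\<forall>i. k < i \<longrightarrow> i < r \<longrightarrow> A1 $$ (i, k) = 0"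
    "\<forall>p<k. \<forall>j<c. A1 $$ (p, j) = A $$ (p, j)"
    "\<forall>j<c. (\<forall>i. k \<le> i \<longrightarrow> i < r \<longrightarrow> A $$ (i, j) = 0) \<longrightarrow> (\<forall>i. k \<le> i \<longrightarrow> i < r \<longrightarrow> A1 $$ (i, j) = 0)"
    using unimodular_reduces_clear_column_below[OF A kr k] by blast
  have A1c: "A1 \<in> carrier_mat r c"
    using unimodular_reduces_carrier[OF A1(1) A] .
  have same1: "\<forall>i<r. \<forall>j<k. A1 $$ (i, j) = A $$ (i, j)"
    using A1(3,4) left_zero k by (metis linorder_not_le order.strict_trans)
  then have "hermite_prefix A1 k"
    using hermite_prefix_cong[OF prefix] A A1c by auto
  then have "A1 $$ (k, k) \<noteq> 0"
    using hermite_prefix_pivot_nonzero[OF A1c full_column_rank_unimodular_reduces[OF A1(1) rank]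
        _ k A1(2)] by simp
  then obtain A2 where A2: "unimodular_reduces A1 A2" "0 < A2 $$ (k, k)"
    "\<forall>i<r. \<forall>j<c. i \<noteq> k \<longrightarrow> A2 $$ (i, j) = A1 $$ (i, j)"
    "\<forall>j<c. A1 $$ (k, j) = 0 \<longrightarrow> A2 $$ (k, j) = 0"
    using unimodular_reduces_positive_pivot[OF A1c kr k] by blast
  have A2c: "A2 \<in> carrier_mat r c"
    using unimodular_reduces_carrier[OF A2(1) A1c] .
  have same2: "\<forall>i<r. \<forall>j<k. A2 $$ (i, j) = A $$ (i, j)"
    using A2(3,4) same1 left_zero k kr by (metis order.strict_trans order_refl)
  obtain B where B: "unimodular_reduces A2 B" "\<forall>i<k. 0 \<le> B $$ (i, k) \<and> B $$ (i, k) < B $$ (k, k)"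
    "\<forall>p<r. \<forall>j<c. k \<le> p \<or> j < k \<longrightarrow> B $$ (p, j) = A2 $$ (p, j)"
    using unimodular_reduces_reduce_column_above[OF A2c kr k A2(2)] same2 left_zero kr by auto
  have Bc: "B \<in> carrier_mat r c"
    using unimodular_reduces_carrier[OF B(1) A2c] .
  have "hermite_prefix B k"
    using hermite_prefix_cong[OF prefix] B(3) same2 Bc A k by auto
  moreover have "\<forall>i. k < i \<longrightarrow> i < r \<longrightarrow> B $$ (i, k) = 0"
    using B(3) A2(3) A1(2) k by auto
  ultimately have "hermite_prefix B (Suc k)"
    using B(2,3) A2(2) Bc kr k by (auto simp: hermite_prefix_Suc)
  then show ?thesis
    using unimodular_reduces_trans[OF unimodular_reduces_trans[OF A1(1) A2(1)] B(1)] by blast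
qed

lemma hermite_form_exists:
  assumes A: "A \<in> carrier_mat r c" and rank: "full_column_rank A"
  shows "\<exists>W. W \<in> carrier_mat r r \<and> unimodular W \<and> hermite_form (W * A)"
proof -
  have "\<exists>B. unimodular_reduces A B \<and> hermite_prefix B k" if "k \<le> c" for k
    using that
  proof (induction k)
    case 0
    show ?case
      using unimodular_reduces_refl by (auto simp: hermite_prefix_def)
  next
    case (Suc k)
    then obtain B where B: "unimodular_reduces A B" "hermite_prefix B k"
      by auto
    then show ?case
      using hermite_prefix_extend[OF unimodular_reduces_carrier[OF B(1) A]
          full_column_rank_unimodular_reduces[OF B(1) rank] B(2)] Suc.prems
        unimodular_reduces_trans[OF B(1)] by (meson Suc_le_lessD)
  qed
  then obtain B where "unimodular_reduces A B" "hermite_prefix B c"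
    by blast
  then show ?thesis
    using A hermite_form_if_hermite_prefix unimodular_reduces_carrier[of A B r c]
    unfolding unimodular_reduces_def by fastforce
qed

lemma hermite_basis_exists:
  assumes "full_column_rank A"
  shows "\<exists>B. hermite_basis A B"
  using hermite_form_exists[OF carrier_matI[OF refl refl] assms] unfolding hermite_basis_def by blast

section \<open>Row lattices\<close>

lemma mem_row_lattice_iff:
  "x \<in> row_lattice A \<longleftrightarrow> (\<exists>c\<in>carrier_vec (dim_row A). x = transpose_mat A *\<^sub>v c)"
  unfolding row_lattice_def by auto

lemma row_lattice_mult_subset:
  assumes W: "W \<in> carrier_mat p r" and A: "A \<in> carrier_mat r c"
  shows "row_lattice (W * A) \<subseteq> row_lattice A"
proof
  fix x assume "x \<in> row_lattice (W * A)"
  then obtain y where y: "y \<in> carrier_vec p" "x = transpose_mat (W * A) *\<^sub>v y"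
    using W by (auto simp: mem_row_lattice_iff)
  then have "x = transpose_mat A *\<^sub>v (transpose_mat W *\<^sub>v y)"
    using W A by (simp add: transpose_mult assoc_mult_mat_vec[of _ c r _ p])
  then show "x \<in> row_lattice A"
    using W A y(1) by (auto simp: mem_row_lattice_iff)
qed

text \<open>The inverse of W is the integer matrix det W \<cdot> adj W, because det W = \<plusminus>1.\<close>

lemma row_lattice_unimodular_mult:
  assumes W: "W \<in> carrier_mat r r" "unimodular W" and A: "A \<in> carrier_mat r c"
  shows "row_lattice (W * A) = row_lattice A"
proof
  show "row_lattice (W * A) \<subseteq> row_lattice A"
    using row_lattice_mult_subset[OF W(1) A] .
  define V where "V = det W \<cdot>\<^sub>m adj_mat W"
  have V: "V \<in> carrier_mat r r"
    using adj_mat(1)[OF W(1)] by (simp add: V_def)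
  have "V * W = det W \<cdot>\<^sub>m (det W \<cdot>\<^sub>m 1\<^sub>m r)"
    using adj_mat[OF W(1)] by (simp add: V_def mult_smult_assoc_mat[OF _ W(1)])
  also have "\<dots> = 1\<^sub>m r"
    using W(2) unfolding unimodular_def by (auto intro!: eq_matI)
  finally have "A = V * (W * A)"
    using A V W(1) by (simp add: assoc_mult_mat[OF V W(1) A, symmetric])
  then show "row_lattice A \<subseteq> row_lattice (W * A)"
    using row_lattice_mult_subset[OF V mult_carrier_mat[OF W(1) A]] by simp
qed

lemma row_lattice_drop_zero_rows:
  assumes A: "A \<in> carrier_mat R c" and N: "N \<le> R"
    and zero: "\<And>i j. N \<le> i \<Longrightarrow> i < R \<Longrightarrow> j < c \<Longrightarrow> A $$ (i, j) = 0"
  shows "row_lattice (mat N c (\<lambda>(i, j). A $$ (i, j))) = row_lattice A"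
proof
  define B where "B = mat N c (\<lambda>(i, j). A $$ (i, j))"
  define P :: "int mat" where "P = mat N R (\<lambda>(i, j). of_bool (i = j))"
  define Q :: "int mat" where "Q = mat R N (\<lambda>(i, j). of_bool (i = j))"
  have "B = P * A"
    using A N by (intro eq_matI) (auto simp: B_def P_def scalar_prod_def)
  then show "row_lattice B \<subseteq> row_lattice A"
    using row_lattice_mult_subset[of P N R A c] A by (simp add: P_def)
  have "A = Q * B"
    using A zero by (intro eq_matI) (auto simp: B_def Q_def scalar_prod_def Int_insert_right)
  then show "row_lattice A \<subseteq> row_lattice B"
    using row_lattice_mult_subset[of Q R N B c] by (simp add: Q_def B_def)
qed

lemma hermite_basis_row_lattice:
  assumes "hermite_basis A B"
  shows "row_lattice B = row_lattice A"
proof -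
  obtain W where W: "W \<in> carrier_mat (dim_row A) (dim_row A)" "unimodular W" "hermite_form (W * A)"
    and B: "B = mat (dim_col A) (dim_col A) (\<lambda>(i, j). (W * A) $$ (i, j))"
    using assms unfolding hermite_basis_def by blast
  have WA: "W * A \<in> carrier_mat (dim_row A) (dim_col A)"
    using W(1) by simp
  have "row_lattice B = row_lattice (W * A)"
    unfolding B using W(3) WA by (intro row_lattice_drop_zero_rows) (auto simp: hermite_form_def)
  also have "\<dots> = row_lattice A"
    using row_lattice_unimodular_mult[OF W(1,2) carrier_matI[OF refl refl]] .
  finally show ?thesis .
qed

lemma hermite_basis_triangular:
  assumes "hermite_basis A B"
  shows "B \<in> carrier_mat (dim_col A) (dim_col A)" "upper_triangular B" "\<forall>i<dim_col A. 0 < B $$ (i, i)"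
proof -
  obtain W where W: "W \<in> carrier_mat (dim_row A) (dim_row A)" "hermite_form (W * A)"
    and B: "B = mat (dim_col A) (dim_col A) (\<lambda>(i, j). (W * A) $$ (i, j))"
    using assms unfolding hermite_basis_def by blast
  show "B \<in> carrier_mat (dim_col A) (dim_col A)"
    using B by simp
  show "upper_triangular B" "\<forall>i<dim_col A. 0 < B $$ (i, i)"
    using W(2) unfolding B hermite_form_def by (auto intro!: upper_triangularI)
qed

lemma upper_triangular_four_block_split:
  fixes B :: "'a :: idom mat"
  assumes B: "B \<in> carrier_mat (m + n) (m + n)" and upper: "upper_triangular B"
    and diag: "\<forall>i<m. B $$ (i, i) \<noteq> 0"
  shows "\<exists>T X H. T \<in> carrier_mat m m \<and> X \<in> carrier_mat m n \<and> H \<in> carrier_mat n n \<and>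
    B = four_block_mat T X (0\<^sub>m n m) H \<and> det T \<noteq> 0"
proof -
  obtain T X Z H where split: "split_block B m m = (T, X, Z, H)"
    by (metis prod_cases4)
  note blocks = split_block[OF split, of n n]
  have "Z = 0\<^sub>m n m"
    using split upper_triangularD[OF upper] B
    by (auto simp: split_block_def Let_def intro!: eq_matI)
  have T: "T \<in> carrier_mat m m" "upper_triangular T" "\<forall>i<m. T $$ (i, i) \<noteq> 0"
    using split upper_triangularD[OF upper] B diag
    by (auto simp: split_block_def Let_def intro!: upper_triangularI)
  then have "det T \<noteq> 0"
    by (simp add: det_upper_triangular prod_list_diag_prod)
  then show ?thesis
    using T(1) blocks B \<open>Z = 0\<^sub>m n m\<close> by auto
qed

section \<open>Row lattices of block matrices\<close>

lemma zero_mult_mat_vec [simp]: "v \<in> carrier_vec c \<Longrightarrow> 0\<^sub>m r c *\<^sub>v v = (0\<^sub>v r :: 'a :: semiring_0 vec)"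
  by (intro eq_vecI) (auto simp: scalar_prod_def)

lemma mult_mat_vec_zero [simp]: "A \<in> carrier_mat r c \<Longrightarrow> A *\<^sub>v 0\<^sub>v c = (0\<^sub>v r :: 'a :: semiring_0 vec)"
  by (intro eq_vecI) auto

lemma mult_mat_vec_uminus:
  "A \<in> carrier_mat r c \<Longrightarrow> v \<in> carrier_vec c \<Longrightarrow> A *\<^sub>v (- v) = - (A *\<^sub>v (v :: 'a :: ring vec))"
  by (intro eq_vecI) (auto simp: scalar_prod_def sum_negf)

lemma zero_eq_add_vec_iff:
  "a \<in> carrier_vec n \<Longrightarrow> b \<in> carrier_vec n \<Longrightarrow> 0\<^sub>v n = a + b \<longleftrightarrow> b = - (a :: 'a :: ab_group_add vec)"
  by (auto simp: vec_eq_iff) (metis add.commute eq_neg_iff_add_eq_0)+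

lemma mem_row_lattice_four_block_mat:
  assumes P: "P \<in> carrier_mat r1 c1" and Q: "Q \<in> carrier_mat r1 c2"
    and R: "R \<in> carrier_mat r2 c1" and S: "S \<in> carrier_mat r2 c2"
  shows "x \<in> row_lattice (four_block_mat P Q R S) \<longleftrightarrow> (\<exists>a\<in>carrier_vec r1. \<exists>b\<in>carrier_vec r2.
    x = (transpose_mat P *\<^sub>v a + transpose_mat R *\<^sub>v b) @\<^sub>v (transpose_mat Q *\<^sub>v a + transpose_mat S *\<^sub>v b))"
  (is "_ \<longleftrightarrow> ?blocks")
proof -
  have transpose: "transpose_mat (four_block_mat P Q R S) =
      four_block_mat (transpose_mat P) (transpose_mat R) (transpose_mat Q) (transpose_mat S)"
    using transpose_four_block_mat[OF P Q R S] .
  have "x \<in> row_lattice (four_block_mat P Q R S) \<longleftrightarrow>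
      (\<exists>y\<in>carrier_vec (r1 + r2). x = transpose_mat (four_block_mat P Q R S) *\<^sub>v y)"
    using P S by (simp add: mem_row_lattice_iff)
  also have "\<dots> \<longleftrightarrow> (\<exists>a\<in>carrier_vec r1. \<exists>b\<in>carrier_vec r2.
      x = transpose_mat (four_block_mat P Q R S) *\<^sub>v (a @\<^sub>v b))"
    by (metis append_carrier_vec vec_first_carrier vec_first_last_append vec_last_carrier)
  also have "\<dots> \<longleftrightarrow> ?blocks"
    unfolding transpose using P Q R S
    by (intro bex_cong refl) (simp add: four_block_mat_mult_vec[of _ c1 r1 _ r2 _ c2])
  finally show ?thesis .
qed

definition lattice_head :: "nat \<Rightarrow> int vec set \<Rightarrow> int vec set" where
  "lattice_head m L = {u \<in> carrier_vec m. \<exists>w. u @\<^sub>v w \<in> L}"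

definition lattice_tail_slice :: "nat \<Rightarrow> int vec set \<Rightarrow> int vec set" where
  "lattice_tail_slice m L = {w. 0\<^sub>v m @\<^sub>v w \<in> L}"

lemma mem_row_lattice_relations_block:
  assumes M: "M \<in> carrier_mat l m" and F: "F \<in> carrier_mat n m"
  shows "x \<in> row_lattice (four_block_mat M (0\<^sub>m l n) F (1\<^sub>m n)) \<longleftrightarrow>
    (\<exists>c\<in>carrier_vec l. \<exists>d\<in>carrier_vec n. x = (transpose_mat M *\<^sub>v c + transpose_mat F *\<^sub>v d) @\<^sub>v d)"
  unfolding mem_row_lattice_four_block_mat[OF M zero_carrier_mat F one_carrier_mat]
  by (intro bex_cong refl) simp

lemma lattice_head_relations_block:
  assumes M: "M \<in> carrier_mat l m" and F: "F \<in> carrier_mat n m"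
  shows "lattice_head m (row_lattice (four_block_mat M (0\<^sub>m l n) F (1\<^sub>m n))) =
    lattice_sum (row_lattice M) (row_lattice F)"
proof (rule Set.set_eqI)
  fix u
  have "u \<in> lattice_head m (row_lattice (four_block_mat M (0\<^sub>m l n) F (1\<^sub>m n))) \<longleftrightarrow>
      (\<exists>c\<in>carrier_vec l. \<exists>d\<in>carrier_vec n. u = transpose_mat M *\<^sub>v c + transpose_mat F *\<^sub>v d)"
    unfolding lattice_head_def mem_row_lattice_relations_block[OF M F] using M F
    by (auto simp: append_vec_eq[of u m]) (metis add_carrier_vec mult_mat_vec_carrier transpose_carrier_mat)
  also have "\<dots> \<longleftrightarrow> u \<in> lattice_sum (row_lattice M) (row_lattice F)"
    unfolding lattice_sum_def mem_row_lattice_iff using M F by auto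
  finally show "u \<in> lattice_head m (row_lattice (four_block_mat M (0\<^sub>m l n) F (1\<^sub>m n))) \<longleftrightarrow>
      u \<in> lattice_sum (row_lattice M) (row_lattice F)" .
qed

lemma lattice_tail_slice_relations_block:
  assumes M: "M \<in> carrier_mat l m" and F: "F \<in> carrier_mat n m"
  shows "lattice_tail_slice m (row_lattice (four_block_mat M (0\<^sub>m l n) F (1\<^sub>m n))) =
    relations_lattice M F"
proof (rule Set.set_eqI)
  fix p
  have "p \<in> lattice_tail_slice m (row_lattice (four_block_mat M (0\<^sub>m l n) F (1\<^sub>m n))) \<longleftrightarrow>
      p \<in> carrier_vec n \<and> (\<exists>c\<in>carrier_vec l. 0\<^sub>v m = transpose_mat M *\<^sub>v c + transpose_mat F *\<^sub>v p)"
    unfolding lattice_tail_slice_def mem_row_lattice_relations_block[OF M F]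
    using M F by (auto simp: append_vec_eq[OF zero_carrier_vec])
  also have "\<dots> \<longleftrightarrow> p \<in> carrier_vec n \<and> (\<exists>c\<in>carrier_vec l. transpose_mat F *\<^sub>v p = transpose_mat M *\<^sub>v (- c))"
    using M F by (auto simp: mult_mat_vec_uminus[of _ m l] zero_eq_add_vec_iff[of _ m])
  also have "\<dots> \<longleftrightarrow> p \<in> relations_lattice M F"
    unfolding relations_lattice_def mem_row_lattice_iff using M F
    by (auto, metis uminus_carrier_vec uminus_uminus_vec)
  finally show "p \<in> lattice_tail_slice m (row_lattice (four_block_mat M (0\<^sub>m l n) F (1\<^sub>m n))) \<longleftrightarrow>
      p \<in> relations_lattice M F" .
qed

lemma full_column_rank_relations_block:
  assumes M: "M \<in> carrier_mat l m" and F: "F \<in> carrier_mat n m" and rank: "full_column_rank M"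
  shows "full_column_rank (four_block_mat M (0\<^sub>m l n) F (1\<^sub>m n))"
  unfolding full_column_rank_def
proof (intro allI impI)
  let ?q = "map_mat rat_of_int"
  have qM: "?q M \<in> carrier_mat l m" and qF: "?q F \<in> carrier_mat n m"
    using M F by auto
  have qK: "?q (four_block_mat M (0\<^sub>m l n) F (1\<^sub>m n)) = four_block_mat (?q M) (0\<^sub>m l n) (?q F) (1\<^sub>m n)"
  proof -
    have "?q (0\<^sub>m l n) = 0\<^sub>m l n" "?q (1\<^sub>m n) = 1\<^sub>m n"
      by (auto intro!: eq_matI)
    then show ?thesis
      using map_four_block_mat[OF M zero_carrier_mat F one_carrier_mat, of rat_of_int] by simp
  qed
  fix v :: "rat vec"
  assume v: "v \<in> carrier_vec (dim_col (four_block_mat M (0\<^sub>m l n) F (1\<^sub>m n)))"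
    and kernel: "?q (four_block_mat M (0\<^sub>m l n) F (1\<^sub>m n)) *\<^sub>v v = 0\<^sub>v (dim_row (four_block_mat M (0\<^sub>m l n) F (1\<^sub>m n)))"
  define a where "a = vec_first v m"
  define b where "b = vec_last v n"
  have ab: "a \<in> carrier_vec m" "b \<in> carrier_vec n" "v = a @\<^sub>v b"
    using v M by (auto simp: a_def b_def)
  have "0\<^sub>v l @\<^sub>v 0\<^sub>v n = (0\<^sub>v (l + n) :: rat vec)"
    by auto
  then have "(?q M *\<^sub>v a) @\<^sub>v (?q F *\<^sub>v a + b) = 0\<^sub>v l @\<^sub>v 0\<^sub>v n"
    using kernel M F ab qM qF unfolding qK
    by (auto simp: four_block_mat_mult_vec[OF qM _ qF, of _ n])
  then have "?q M *\<^sub>v a = 0\<^sub>v l" and "?q F *\<^sub>v a + b = 0\<^sub>v n"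
    using qM ab(1) by (auto simp: append_vec_eq[of _ l])
  then have "a = 0\<^sub>v m" and "b = 0\<^sub>v n"
    using rank M ab qF unfolding full_column_rank_def by auto
  then show "v = 0\<^sub>v (dim_col (four_block_mat M (0\<^sub>m l n) F (1\<^sub>m n)))"
    using ab(3) M by (auto intro!: eq_vecI)
qed

lemma mem_row_lattice_block_upper_triangular:
  assumes T: "T \<in> carrier_mat m m" and X: "X \<in> carrier_mat m n" and H: "H \<in> carrier_mat n n"
  shows "x \<in> row_lattice (four_block_mat T X (0\<^sub>m n m) H) \<longleftrightarrow>
    (\<exists>a\<in>carrier_vec m. \<exists>b\<in>carrier_vec n.
      x = (transpose_mat T *\<^sub>v a) @\<^sub>v (transpose_mat X *\<^sub>v a + transpose_mat H *\<^sub>v b))"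
  unfolding mem_row_lattice_four_block_mat[OF T X zero_carrier_mat H]
  using T by (intro bex_cong refl) simp

lemma lattice_head_block_upper_triangular:
  assumes T: "T \<in> carrier_mat m m" and X: "X \<in> carrier_mat m n" and H: "H \<in> carrier_mat n n"
  shows "lattice_head m (row_lattice (four_block_mat T X (0\<^sub>m n m) H)) = row_lattice T"
proof (rule Set.set_eqI, rule iffI)
  fix u assume "u \<in> lattice_head m (row_lattice (four_block_mat T X (0\<^sub>m n m) H))"
  then obtain w a b where "u \<in> carrier_vec m" "a \<in> carrier_vec m" "b \<in> carrier_vec n"
    "u @\<^sub>v w = (transpose_mat T *\<^sub>v a) @\<^sub>v (transpose_mat X *\<^sub>v a + transpose_mat H *\<^sub>v b)"
    unfolding lattice_head_def mem_row_lattice_block_upper_triangular[OF T X H] by blast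
  then show "u \<in> row_lattice T"
    using T by (auto simp: mem_row_lattice_iff)
next
  fix u assume "u \<in> row_lattice T"
  then obtain a where a: "a \<in> carrier_vec m" "u = transpose_mat T *\<^sub>v a"
    using T by (auto simp: mem_row_lattice_iff)
  then have "u @\<^sub>v (transpose_mat X *\<^sub>v a + transpose_mat H *\<^sub>v 0\<^sub>v n) \<in> row_lattice (four_block_mat T X (0\<^sub>m n m) H)"
    unfolding mem_row_lattice_block_upper_triangular[OF T X H] using zero_carrier_vec[of n] by blast
  then show "u \<in> lattice_head m (row_lattice (four_block_mat T X (0\<^sub>m n m) H))"
    using a T unfolding lattice_head_def by auto
qed

lemma lattice_tail_slice_block_upper_triangular:
  assumes T: "T \<in> carrier_mat m m" and X: "X \<in> carrier_mat m n" and H: "H \<in> carrier_mat n n"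
    and "det T \<noteq> 0"
  shows "lattice_tail_slice m (row_lattice (four_block_mat T X (0\<^sub>m n m) H)) = row_lattice H"
proof (rule Set.set_eqI, rule iffI)
  fix p assume "p \<in> lattice_tail_slice m (row_lattice (four_block_mat T X (0\<^sub>m n m) H))"
  then obtain a b where ab: "a \<in> carrier_vec m" "b \<in> carrier_vec n"
    "0\<^sub>v m @\<^sub>v p = (transpose_mat T *\<^sub>v a) @\<^sub>v (transpose_mat X *\<^sub>v a + transpose_mat H *\<^sub>v b)"
    unfolding lattice_tail_slice_def mem_row_lattice_block_upper_triangular[OF T X H] by blast
  then have "transpose_mat T *\<^sub>v a = 0\<^sub>v m" and p: "p = transpose_mat X *\<^sub>v a + transpose_mat H *\<^sub>v b"
    using T by (auto simp: append_vec_eq[OF zero_carrier_vec])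
  then have "a = 0\<^sub>v m"
    using det_0_iff_vec_prod_zero[of "transpose_mat T" m] ab(1) T \<open>det T \<noteq> 0\<close>
    by (auto simp: det_transpose)
  then show "p \<in> row_lattice H"
    using p ab(2) X H by (auto simp: mem_row_lattice_iff)
next
  fix p assume "p \<in> row_lattice H"
  then obtain b where b: "b \<in> carrier_vec n" "p = transpose_mat H *\<^sub>v b"
    using H by (auto simp: mem_row_lattice_iff)
  then have "0\<^sub>v m @\<^sub>v p = (transpose_mat T *\<^sub>v 0\<^sub>v m) @\<^sub>v
      (transpose_mat X *\<^sub>v 0\<^sub>v m + transpose_mat H *\<^sub>v b)"
    using T X H by auto
  then show "p \<in> lattice_tail_slice m (row_lattice (four_block_mat T X (0\<^sub>m n m) H))"
    unfolding lattice_tail_slice_def mem_row_lattice_block_upper_triangular[OF T X H]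
    using b(1) zero_carrier_vec[of m] by blast
qed

lemma hermite_basis_relations_block:
  assumes M: "M \<in> carrier_mat l m" and F: "F \<in> carrier_mat n m"
    and basis: "hermite_basis (four_block_mat M (0\<^sub>m l n) F (1\<^sub>m n)) B"
  shows "\<exists>T X H. T \<in> carrier_mat m m \<and> X \<in> carrier_mat m n \<and> H \<in> carrier_mat n n \<and>
    B = four_block_mat T X (0\<^sub>m n m) H \<and>
    row_lattice T = lattice_sum (row_lattice M) (row_lattice F) \<and>
    row_lattice H = relations_lattice M F"
proof -
  have "B \<in> carrier_mat (m + n) (m + n)" "upper_triangular B" "\<forall>i<m. B $$ (i, i) \<noteq> 0"
    using hermite_basis_triangular[OF basis] M by (auto simp: less_imp_neq[symmetric])
  then obtain T X H where T: "T \<in> carrier_mat m m" and X: "X \<in> carrier_mat m n"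
    and H: "H \<in> carrier_mat n n" and B: "B = four_block_mat T X (0\<^sub>m n m) H" and "det T \<noteq> 0"
    using upper_triangular_four_block_split by blast
  have lattice: "row_lattice (four_block_mat T X (0\<^sub>m n m) H) =
      row_lattice (four_block_mat M (0\<^sub>m l n) F (1\<^sub>m n))"
    using hermite_basis_row_lattice[OF basis] unfolding B .
  have "row_lattice T = lattice_sum (row_lattice M) (row_lattice F)"
    using lattice_head_block_upper_triangular[OF T X H] lattice_head_relations_block[OF M F]
    unfolding lattice by simp
  moreover have "row_lattice H = relations_lattice M F"
    using lattice_tail_slice_block_upper_triangular[OF T X H \<open>det T \<noteq> 0\<close>]
      lattice_tail_slice_relations_block[OF M F]
    unfolding lattice by simp
  ultimately show ?thesis
    using T X H B by blast
qed

theorem mainTheorem1: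
  fixes M F :: "int mat" and l m n :: nat
  assumes "M \<in> carrier_mat l m" and "F \<in> carrier_mat n m"
    and "full_column_rank M"
  defines "K \<equiv> four_block_mat M (0\<^sub>m l n) F (1\<^sub>m n)"
  shows "full_column_rank K \<and>
    (\<exists>B. hermite_basis K B) \<and>
    (\<forall>B. hermite_basis K B \<longrightarrow>
       (\<exists>T X H. T \<in> carrier_mat m m \<and> X \<in> carrier_mat m n \<and> H \<in> carrier_mat n n \<and>
          B = four_block_mat T X (0\<^sub>m n m) H \<and>
          row_lattice T = lattice_sum (row_lattice M) (row_lattice F) \<and>
          row_lattice H = relations_lattice M F))"
proof -
  have "full_column_rank K"
    unfolding K_def using full_column_rank_relations_block assms(1-3) .
  then show ?thesis
    using hermite_basis_exists hermite_basis_relations_block[OF assms(1,2)] unfolding K_def by blast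
qed

end
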